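(* Let $R\in\{\mathrm C,\mathrm S\}$, let $p,q\in[0,1]$ be rational numbers with $p<q$, let $I$ be a closed interval with $I\subseteq(0,1)$, and let $\varpi\in\Omega$ be wCH-random for $I$. Then a path $\omega\in\Omega$ is $R$-random for $\varphi^\varpi_{p,q}$ if and only if it is $R$-random for $[p,q]$.
   Context: Notation: $\mathbb N=\{1,2,\dots\}$, $\mathbb N_0=\mathbb N\cup\{0\}$. $\Omega=\{0,1\}^{\mathbb N}$ is the set of paths $\omega=(\omega_1,\omega_2,\dots)$; $\omega_{1:n}=(\omega_1,\dots,\omega_n)$, $\omega_{1:0}=\square$. $\mathbb S=\bigcup_{n\in\mathbb N_0}\{0,1\}^n$ is the set of situations, $|s|$ the length, $sx$ concatenation. For $r\in[0,1]$, $f:\{0,1\}\to\mathbb R$: $E_r(f)=rf(1)+(1-r)f(0)$; for a closed interval $I\subseteq[0,1]$, $\overline E_I(f)=\max_{r\in I}E_r(f)$. A forecasting system is a map $\varphi$ from $\mathbb S$ to closed subintervals of $[0,1]$, $\underline\varphi(s)=\min\varphi(s)$, $\overline\varphi(s)=\max\varphi(s)$; being random for an interval $I$ means being random for the constant forecasting system with value $I$. A real process is $F:\mathbb S\to\mathbb R$; $\Delta F(s)$ is $x\mapsto F(sx)-F(s)$. $M$ is a supermartingale for $\varphi$ if $\overline E_{\varphi(s)}(\Delta M(s))\le0$ for all $s$. A test supermartingale for $\varphi$ is a non-negative supermartingale $T$ for $\varphi$ with $T(\square)=1$. Computability: maps from countable effectively encoded domains to $\mathbb N_0$, $\mathbb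 Q$ or $\{0,1\}$ are recursive if Turing-computable; a real map $r$ is computable if $|r(d)-q(d,n)|<2^{-n}$ for a recursive rational $q$. $\overline{\mathbb T}_{\mathrm C}(\varphi)=\overline{\mathbb T}_{\mathrm S}(\varphi)$ is the set of positive, rational-valued, recursive test supermartingales for $\varphi$. $\omega$ is C-random for $\varphi$ if no $T\in\overline{\mathbb T}_{\mathrm C}(\varphi)$ has $\limsup_nT(\omega_{1:n})=\infty$. A real growth function is a computable, non-decreasing, unbounded $\tau:\mathbb N_0\to[0,\infty)$; $\omega$ is S-random for $\varphi$ if there are no $T\in\overline{\mathbb T}_{\mathrm S}(\varphi)$ and real growth function $\tau$ with $\limsup_n[T(\omega_{1:n})-\tau(n)]\ge0$. A selection process is $S:\mathbb S\to\{0,1\}$, temporal if $S(s)$ depends only on $|s|$ (written $S(n)$). A path $\varpi$ is wCH-random for $\varphi$ if for every recursive temporal selection process $S$ with $\lim_n\sum_{k=0}^{n-1}S(k)=\infty$: $\liminf_n\frac{\sum_{k=0}^{n-1}S(k)[\varpi_{k+1}-\underline\varphi(\varpi_{1:k})]}{\sum_{k=0}^{n-1}S(k)}\ge0$ and $\limsup_n\frac{\sum_{k=0}^{n-1}S(k)[\varpi_{k+1}-\overline\varphi(\varpi_{1:k})]}{\sum_{k=0}^{n-1}S(k)}\le0$. For $\varpi\in\Omega$, $\varphi^\varpi_{p,q}$ is the precise forecasting system with $\varphi^\varpi_{p,q}(s)=p$ if $\varpi_{|s|+1}=0$ and $\varphi^\varpi_{p,q}(s)=q$ if $\varpi_{|s|+1}=1$.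 *)

theory Defs
  imports Complex_Main "HOL-Library.Nat_Bijection" "HOL-Library.Extended_Real"
    "HOL-Library.Liminf_Limsup"
begin

datatype recf = Zero | Succ | Proj nat | Comp recf "recf list" | Prim recf recf | Mn recf

inductive eval :: "recf \<Rightarrow> nat list \<Rightarrow> nat \<Rightarrow> bool" where
  ev_zero: "eval Zero xs 0"
| ev_succ: "eval Succ (x # xs) (Suc x)"
| ev_proj: "i < length xs \<Longrightarrow> eval (Proj i) xs (xs ! i)"
| ev_comp: "length ys = length gs \<Longrightarrow> (\<forall>i < length gs. eval (gs ! i) xs (ys ! i))
            \<Longrightarrow> eval f ys z \<Longrightarrow> eval (Comp f gs) xs z"
| ev_prim0: "eval f xs y \<Longrightarrow> eval (Prim f g) (0 # xs) y"
| ev_primS: "eval (Prim f g) (n # xs) y \<Longrightarrow> eval g (y # n # xs) z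
            \<Longrightarrow> eval (Prim f g) (Suc n # xs) z"
| ev_mn: "eval f (y # xs) 0 \<Longrightarrow> (\<forall>i < y. \<exists>k. eval f (i # xs) (Suc k))
            \<Longrightarrow> eval (Mn f) xs y"

definition recursive_nat :: "(nat \<Rightarrow> nat) \<Rightarrow> bool" where
  "recursive_nat f \<longleftrightarrow> (\<exists>c. \<forall>n. eval c [n] (f n))"

text \<open>Situations are finite binary sequences (True = 1, False = 0);
encoded bijectively as natural numbers.\<close>
type_synonym sit = "bool list"

fun enc_sit :: "sit \<Rightarrow> nat" where
  "enc_sit [] = 0"
| "enc_sit (b # s) = 2 * enc_sit s + (if b then 2 else 1)"

definition dec_rat :: "nat \<Rightarrow> real" where
  "dec_rat n = (case prod_decode n of (a, b) \<Rightarrow> of_int (int_decode a) / of_nat (Suc b))"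

definition recursive_rat_sit :: "(sit \<Rightarrow> real) \<Rightarrow> bool" where
  "recursive_rat_sit F \<longleftrightarrow> (\<exists>g. recursive_nat g \<and> (\<forall>s. F s = dec_rat (g (enc_sit s))))"

definition computable_real_nat :: "(nat \<Rightarrow> real) \<Rightarrow> bool" where
  "computable_real_nat r \<longleftrightarrow> (\<exists>g. recursive_nat g \<and>
      (\<forall>d m. \<bar>r d - dec_rat (g (prod_encode (d, m)))\<bar> < 1 / 2 ^ m))"

text \<open>A path omega :: nat \<Rightarrow> bool; omega k is the (k+1)-th outcome omega_{k+1}.\<close>
definition prefix :: "(nat \<Rightarrow> bool) \<Rightarrow> nat \<Rightarrow> sit" where
  "prefix \<omega> n = map \<omega> [0..<n]"

text \<open>A closed interval [l,u] is represented as a pair (l,u); a forecasting system maps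
situations to closed subintervals of [0,1].\<close>
type_synonym fsys = "sit \<Rightarrow> real \<times> real"

definition is_interval :: "real \<times> real \<Rightarrow> bool" where
  "is_interval I \<longleftrightarrow> 0 \<le> fst I \<and> fst I \<le> snd I \<and> snd I \<le> 1"

definition forecasting_system :: "fsys \<Rightarrow> bool" where
  "forecasting_system \<phi> \<longleftrightarrow> (\<forall>s. is_interval (\<phi> s))"

definition Exp :: "real \<Rightarrow> (bool \<Rightarrow> real) \<Rightarrow> real" where
  "Exp r f = r * f True + (1 - r) * f False"

definition UExp :: "real \<times> real \<Rightarrow> (bool \<Rightarrow> real) \<Rightarrow> real" where
  "UExp I f = (SUP r\<in>{fst I..snd I}. Exp r f)"

definition supermartingale :: "fsys \<Rightarrow> (sit \<Rightarrow> real) \<Rightarrow> bool" where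
  "supermartingale \<phi> M \<longleftrightarrow> (\<forall>s. UExp (\<phi> s) (\<lambda>x. M (s @ [x]) - M s) \<le> 0)"

definition test_supermartingale :: "fsys \<Rightarrow> (sit \<Rightarrow> real) \<Rightarrow> bool" where
  "test_supermartingale \<phi> T \<longleftrightarrow> supermartingale \<phi> T \<and> (\<forall>s. T s \<ge> 0) \<and> T [] = 1"

definition rec_tests :: "fsys \<Rightarrow> (sit \<Rightarrow> real) set" where
  "rec_tests \<phi> = {T. test_supermartingale \<phi> T \<and> (\<forall>s. T s > 0) \<and> (\<forall>s. T s \<in> \<rat>)
                     \<and> recursive_rat_sit T}"

definition C_random :: "fsys \<Rightarrow> (nat \<Rightarrow> bool) \<Rightarrow> bool" where
  "C_random \<phi> \<omega> \<longleftrightarrow> \<not> (\<exists>T\<in>rec_tests \<phi>. limsup (\<lambda>n. ereal (T (prefix \<omega> n))) = \<infinity>)"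

definition real_growth_function :: "(nat \<Rightarrow> real) \<Rightarrow> bool" where
  "real_growth_function \<tau> \<longleftrightarrow> computable_real_nat \<tau> \<and> mono \<tau> \<and> (\<forall>n. \<tau> n \<ge> 0)
      \<and> (\<forall>B. \<exists>n. \<tau> n > B)"

definition S_random :: "fsys \<Rightarrow> (nat \<Rightarrow> bool) \<Rightarrow> bool" where
  "S_random \<phi> \<omega> \<longleftrightarrow> \<not> (\<exists>T\<in>rec_tests \<phi>. \<exists>\<tau>. real_growth_function \<tau> \<and>
      limsup (\<lambda>n. ereal (T (prefix \<omega> n) - \<tau> n)) \<ge> 0)"

text \<open>A temporal selection process S :: nat \<Rightarrow> bool (S n = True means S(n) = 1);
it is recursive if its 0/1 indicator is a recursive map.\<close>
definition recursive_temporal_sel :: "(nat \<Rightarrow> bool) \<Rightarrow> bool" where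
  "recursive_temporal_sel S \<longleftrightarrow> recursive_nat (\<lambda>n. if S n then 1 else 0)"

definition wCH_random :: "fsys \<Rightarrow> (nat \<Rightarrow> bool) \<Rightarrow> bool" where
  "wCH_random \<phi> w \<longleftrightarrow> (\<forall>S. recursive_temporal_sel S \<and>
      filterlim (\<lambda>n. \<Sum>k<n. of_bool (S k) :: real) at_top sequentially \<longrightarrow>
      liminf (\<lambda>n. ereal ((\<Sum>k<n. of_bool (S k) * (of_bool (w k) - fst (\<phi> (prefix w k))))
                          / (\<Sum>k<n. of_bool (S k)))) \<ge> 0 \<and>
      limsup (\<lambda>n. ereal ((\<Sum>k<n. of_bool (S k) * (of_bool (w k) - snd (\<phi> (prefix w k))))
                          / (\<Sum>k<n. of_bool (S k)))) \<le> 0)"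

definition const_fs :: "real \<times> real \<Rightarrow> fsys" where
  "const_fs I = (\<lambda>_. I)"

definition phi_sw :: "(nat \<Rightarrow> bool) \<Rightarrow> real \<Rightarrow> real \<Rightarrow> fsys" where
  "phi_sw w p q = (\<lambda>s. if w (length s) then (q, q) else (p, p))"

end

(*
  Every test for the interval [p, q] is also a test for the system that forecasts q where varpi
  has a 1 and p where it has a 0, so only the converse needs work. A recursive rational test T
  for that system can violate the supermartingale inequality for [p, q] at a situation s only
  through the endpoint that was not forecast there: 0 < E_q(Delta T(s)) with varpi_{|s|+1} = 0,
  or 0 < E_p(Delta T(s)) with varpi_{|s|+1} = 1. For rational p and q the depths |s| of such
  violations form recursive temporal selections picking only zeros, respectively only ones, of
  varpi; since varpi is wCH-random for an interval inside (0, 1), both are finite. Beyond some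
  depth N, T is therefore a supermartingale for [p, q], and restarting T at omega_{1:N} gives a
  recursive test for [p, q] that equals T / T(omega_{1:N}) along omega. Division by a positive
  rational preserves unboundedness, and also the S-criterion once the growth function is divided
  by a rational K >= max 1 T(omega_{1:N}).
*)
theory Submission
  imports Defs
begin

section \<open>Recursive functions of several arguments\<close>

definition rec_fun :: "nat \<Rightarrow> (nat list \<Rightarrow> nat) \<Rightarrow> bool" where
  "rec_fun n f \<longleftrightarrow> (\<exists>c. \<forall>xs. length xs = n \<longrightarrow> eval c xs (f xs))"

definition rec_rel :: "nat \<Rightarrow> (nat list \<Rightarrow> bool) \<Rightarrow> bool" where
  "rec_rel n P \<longleftrightarrow> rec_fun n (\<lambda>xs. of_bool (P xs))"

lemma rec_fun_cong: "rec_fun n f \<Longrightarrow> (\<And>xs. length xs = n \<Longrightarrow> f xs = g xs) \<Longrightarrow> rec_fun n g"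
  unfolding rec_fun_def by metis

lemma rec_fun_proj: "i < n \<Longrightarrow> rec_fun n (\<lambda>xs. xs ! i)"
  unfolding rec_fun_def by (metis ev_proj)

lemma ex_list_nth:
  "(\<forall>x\<in>set xs. \<exists>y. P x y) \<Longrightarrow> \<exists>ys. length ys = length xs \<and> (\<forall>i<length xs. P (xs ! i) (ys ! i))"
proof (induction xs)
  case (Cons a xs)
  then obtain y ys where "P a y" "length ys = length xs" "\<forall>i<length xs. P (xs ! i) (ys ! i)"
    by auto
  then show ?case
    by (intro exI[of _ "y # ys"]) (auto simp: nth_Cons split: nat.splits)
qed simp

lemma rec_fun_comp:
  assumes "rec_fun m f" "length gs = m" "\<forall>g\<in>set gs. rec_fun n g"
  shows "rec_fun n (\<lambda>xs. f (map (\<lambda>g. g xs) gs))"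
proof -
  obtain cf where cf: "\<forall>xs. length xs = m \<longrightarrow> eval cf xs (f xs)"
    using assms(1) unfolding rec_fun_def by auto
  have "\<forall>g\<in>set gs. \<exists>c. \<forall>xs. length xs = n \<longrightarrow> eval c xs (g xs)"
    using assms(3) unfolding rec_fun_def by auto
  from ex_list_nth[OF this] obtain cs where cs: "length cs = length gs"
    "\<forall>i<length gs. \<forall>xs. length xs = n \<longrightarrow> eval (cs ! i) xs ((gs ! i) xs)"
    by auto
  have "eval (Comp cf cs) xs (f (map (\<lambda>g. g xs) gs))" if "length xs = n" for xs
    using that cs cf assms(2) by (intro ev_comp[where ys = "map (\<lambda>g. g xs) gs"]) auto
  then show ?thesis unfolding rec_fun_def by blast
qed

lemma rec_fun_comp1: "rec_fun 1 h \<Longrightarrow> rec_fun n f \<Longrightarrow> rec_fun n (\<lambda>xs. h [f xs])"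
  using rec_fun_comp[of 1 h "[f]" n] by auto

lemma rec_fun_comp2: "rec_fun 2 h \<Longrightarrow> rec_fun n f \<Longrightarrow> rec_fun n g \<Longrightarrow> rec_fun n (\<lambda>xs. h [f xs, g xs])"
  using rec_fun_comp[of 2 h "[f, g]" n] by auto

lemma rec_fun_Suc:
  assumes "rec_fun n f"
  shows "rec_fun n (\<lambda>xs. Suc (f xs))"
proof -
  have "eval Succ xs (Suc (xs ! 0))" if "length xs = 1" for xs
    using that by (cases xs) (auto intro: ev_succ)
  then have "rec_fun 1 (\<lambda>xs. Suc (xs ! 0))"
    unfolding rec_fun_def by blast
  from rec_fun_comp1[OF this assms] show ?thesis by simp
qed

lemma rec_fun_const: "rec_fun n (\<lambda>xs. c)"
proof (induction c)
  case 0
  then show ?case unfolding rec_fun_def by (blast intro: ev_zero)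
qed (rule rec_fun_Suc)

lemma rec_fun_rec:
  assumes "rec_fun n f" "rec_fun (Suc (Suc n)) g"
    and "\<And>xs. length xs = n \<Longrightarrow> h 0 xs = f xs"
    and "\<And>k xs. length xs = n \<Longrightarrow> h (Suc k) xs = g (h k xs # k # xs)"
  shows "rec_fun (Suc n) (\<lambda>ys. h (hd ys) (tl ys))"
proof -
  obtain cf cg where cf: "\<forall>xs. length xs = n \<longrightarrow> eval cf xs (f xs)"
    and cg: "\<forall>xs. length xs = Suc (Suc n) \<longrightarrow> eval cg xs (g xs)"
    using assms(1,2) unfolding rec_fun_def by auto
  have "eval (Prim cf cg) (k # xs) (h k xs)" if "length xs = n" for k xs
  proof (induction k)
    case 0
    show ?case
      using that assms(3) by (auto intro!: ev_prim0 cf[rule_format])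
  next
    case (Suc k)
    show ?case
      using that assms(4) by (auto intro!: ev_primS[OF Suc] cg[rule_format])
  qed
  then have "eval (Prim cf cg) ys (h (hd ys) (tl ys))" if "length ys = Suc n" for ys
    using that by (cases ys) auto
  then show ?thesis unfolding rec_fun_def by blast
qed

lemma rec_fun_tl:
  assumes "rec_fun n f"
  shows "rec_fun (Suc n) (\<lambda>ys. f (tl ys))"
proof -
  have tl: "map (\<lambda>i. ys ! Suc i) [0..<n] = tl ys" if "length ys = Suc n" for ys
    using that by (intro nth_equalityI) (auto simp: nth_tl)
  have "rec_fun (Suc n) (\<lambda>ys. f (map (\<lambda>g. g ys) (map (\<lambda>i ys. ys ! Suc i) [0..<n])))"
    using assms by (intro rec_fun_comp) (auto intro: rec_fun_proj)
  then show ?thesis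
    by (rule rec_fun_cong) (simp add: comp_def tl)
qed

lemma rec_fun_add:
  assumes "rec_fun n f" "rec_fun n g"
  shows "rec_fun n (\<lambda>xs. f xs + g xs)"
proof -
  have "rec_fun (Suc (Suc 0)) (\<lambda>ys. hd ys + tl ys ! 0)"
    by (rule rec_fun_rec[where f = "\<lambda>xs. xs ! 0" and g = "\<lambda>zs. Suc (zs ! 0)"])
      (auto intro: rec_fun_proj rec_fun_Suc)
  then have "rec_fun 2 (\<lambda>ys. ys ! 0 + ys ! 1)"
    unfolding numeral_2_eq_2 by (rule rec_fun_cong) (auto simp: length_Suc_conv)
  from rec_fun_comp2[OF this assms] show ?thesis by simp
qed

lemma rec_fun_mult:
  assumes "rec_fun n f" "rec_fun n g"
  shows "rec_fun n (\<lambda>xs. f xs * g xs)"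
proof -
  have "rec_fun (Suc (Suc (Suc 0))) (\<lambda>zs. zs ! 0 + zs ! 2)"
    by (intro rec_fun_add rec_fun_proj) simp_all
  then have "rec_fun (Suc (Suc 0)) (\<lambda>ys. hd ys * tl ys ! 0)"
    by (rule rec_fun_rec[OF rec_fun_const]) simp_all
  then have "rec_fun 2 (\<lambda>ys. ys ! 0 * ys ! 1)"
    unfolding numeral_2_eq_2 by (rule rec_fun_cong) (auto simp: length_Suc_conv)
  from rec_fun_comp2[OF this assms] show ?thesis by simp
qed

lemma rec_fun_diff:
  assumes "rec_fun n f" "rec_fun n g"
  shows "rec_fun n (\<lambda>xs. f xs - g xs)"
proof -
  have "rec_fun (Suc 0) (\<lambda>ys. hd ys - 1)"
    by (rule rec_fun_rec[OF rec_fun_const rec_fun_proj[of 1]]) simp_all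
  then have "rec_fun 1 (\<lambda>ys. ys ! 0 - 1)"
    unfolding One_nat_def by (rule rec_fun_cong) (auto simp: length_Suc_conv)
  from rec_fun_comp1[OF this rec_fun_proj, of 0 "Suc (Suc (Suc 0))"]
  have pred: "rec_fun (Suc (Suc (Suc 0))) (\<lambda>zs. zs ! 0 - 1)" by simp
  have "rec_fun (Suc (Suc 0)) (\<lambda>ys. tl ys ! 0 - hd ys)"
    by (rule rec_fun_rec[where h = "\<lambda>k xs. xs ! 0 - k" and f = "\<lambda>xs. xs ! 0", OF rec_fun_proj pred])
      simp_all
  then have "rec_fun 2 (\<lambda>ys. ys ! 1 - ys ! 0)"
    unfolding numeral_2_eq_2 by (rule rec_fun_cong) (auto simp: length_Suc_conv)
  from rec_fun_comp2[OF this assms(2,1)] show ?thesis by simp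
qed

lemma rec_fun_power2:
  assumes "rec_fun n f"
  shows "rec_fun n (\<lambda>xs. 2 ^ f xs)"
proof -
  have "rec_fun (Suc (Suc 0)) (\<lambda>zs. zs ! 0 + zs ! 0)"
    by (intro rec_fun_add rec_fun_proj) simp_all
  then have "rec_fun (Suc 0) (\<lambda>ys. 2 ^ hd ys)"
    by (rule rec_fun_rec[OF rec_fun_const]) simp_all
  then have "rec_fun 1 (\<lambda>ys. 2 ^ (ys ! 0))"
    unfolding One_nat_def by (rule rec_fun_cong) (auto simp: length_Suc_conv)
  from rec_fun_comp1[OF this assms] show ?thesis by simp
qed

lemma rec_fun_sum:
  assumes "rec_fun (Suc n) f" "rec_fun n B"
  shows "rec_fun n (\<lambda>xs. \<Sum>i<B xs. f (i # xs))"
proof -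
  have nths: "map (\<lambda>i. xs ! i) [0..<n] = xs" if "length xs = n" for xs :: "nat list"
    by (simp add: that[symmetric] map_nth)
  have "rec_fun (Suc n) (\<lambda>ys. \<Sum>i<hd ys. f (i # tl ys))"
    by (rule rec_fun_rec[where f = "\<lambda>_. 0" and g = "\<lambda>zs. zs ! 0 + f (tl zs)"
          and h = "\<lambda>k xs. \<Sum>i<k. f (i # xs)"])
      (auto intro: rec_fun_proj rec_fun_add rec_fun_const rec_fun_tl[OF assms(1)])
  then have "rec_fun n (\<lambda>xs. (\<lambda>ys. \<Sum>i<hd ys. f (i # tl ys))
      (map (\<lambda>g. g xs) (B # map (\<lambda>i xs. xs ! i) [0..<n])))"
    by (rule rec_fun_comp) (auto intro: assms(2) rec_fun_proj)
  then show ?thesis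
    by (rule rec_fun_cong) (simp add: comp_def nths)
qed

lemma rec_rel_less: "rec_fun n f \<Longrightarrow> rec_fun n g \<Longrightarrow> rec_rel n (\<lambda>xs. f xs < g xs)"
  unfolding rec_rel_def
  \<comment> \<open>with truncated subtraction, 1 - (1 - (g - f)) is 1 if f < g and 0 otherwise\<close>
  by (rule rec_fun_cong[of n "\<lambda>xs. 1 - (1 - (g xs - f xs))"])
    (auto intro!: rec_fun_diff rec_fun_const)

lemma rec_rel_le: "rec_fun n f \<Longrightarrow> rec_fun n g \<Longrightarrow> rec_rel n (\<lambda>xs. f xs \<le> g xs)"
  using rec_rel_less[of n f "\<lambda>xs. Suc (g xs)"] rec_fun_Suc[of n g] by (simp add: less_Suc_eq_le)

lemma rec_rel_conj:
  assumes "rec_rel n P" "rec_rel n Q"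
  shows "rec_rel n (\<lambda>xs. P xs \<and> Q xs)"
  using rec_fun_mult[OF assms[unfolded rec_rel_def]] unfolding rec_rel_def
  by (rule rec_fun_cong) simp

lemma rec_rel_eq: "rec_fun n f \<Longrightarrow> rec_fun n g \<Longrightarrow> rec_rel n (\<lambda>xs. f xs = g xs)"
  using rec_rel_conj[OF rec_rel_le rec_rel_le, of n f g g f] by (simp add: order_eq_iff)

lemma rec_rel_bounded_ex:
  assumes "rec_rel (Suc n) P" "rec_fun n B"
  shows "rec_rel n (\<lambda>xs. \<exists>i<B xs. P (i # xs))"
proof -
  have "rec_fun n (\<lambda>xs. \<Sum>i<B xs. of_bool (P (i # xs)))"
    using assms unfolding rec_rel_def by (intro rec_fun_sum)
  then have "rec_rel n (\<lambda>xs. 0 < (\<Sum>i<B xs. of_bool (P (i # xs)) :: nat))"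
    by (intro rec_rel_less rec_fun_const)
  then show ?thesis
    unfolding rec_rel_def by (rule rec_fun_cong) (auto simp: zero_less_iff_neq_zero)
qed

lemma rec_fun_If:
  "rec_rel n P \<Longrightarrow> rec_fun n f \<Longrightarrow> rec_fun n g \<Longrightarrow> rec_fun n (\<lambda>xs. if P xs then f xs else g xs)"
  unfolding rec_rel_def
  by (rule rec_fun_cong[of n "\<lambda>xs. of_bool (P xs) * f xs + (1 - of_bool (P xs)) * g xs"])
    (auto intro!: rec_fun_add rec_fun_mult rec_fun_diff rec_fun_const)

lemma div_eq_sum_of_bool:
  fixes x y :: nat
  assumes "y > 0"
  shows "x div y = (\<Sum>i<x. of_bool ((i + 1) * y \<le> x))"
proof -
  have iff: "(i + 1) * y \<le> x \<longleftrightarrow> i < x div y" for i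
    using assms by (simp add: less_eq_div_iff_mult_less_eq Suc_le_eq[symmetric])
  have "i < x div y \<Longrightarrow> i < x" for i
    using div_le_dividend[of x y] by linarith
  then have "{..<x} \<inter> {i. (i + 1) * y \<le> x} = {..<x div y}"
    unfolding iff by auto
  then show ?thesis
    by (simp add: sum_of_bool_eq)
qed

lemma rec_fun_div:
  assumes "rec_fun n f" "rec_fun n g"
  shows "rec_fun n (\<lambda>xs. f xs div g xs)"
proof -
  have "rec_rel (Suc n) (\<lambda>ys. (ys ! 0 + 1) * g (tl ys) \<le> f (tl ys))"
    by (intro rec_rel_le rec_fun_mult rec_fun_add rec_fun_proj rec_fun_const rec_fun_tl assms) simp
  from rec_fun_sum[OF this[unfolded rec_rel_def] assms(1)]
  have "rec_fun n (\<lambda>xs. \<Sum>i<f xs. of_bool ((i + 1) * g xs \<le> f xs))"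
    by simp
  then have "rec_fun n (\<lambda>xs. if g xs = 0 then 0 else \<Sum>i<f xs. of_bool ((i + 1) * g xs \<le> f xs))"
    by (intro rec_fun_If rec_rel_eq rec_fun_const assms)
  then show ?thesis
    by (rule rec_fun_cong) (simp add: div_eq_sum_of_bool)
qed

lemma rec_fun_mod:
  assumes "rec_fun n f" "rec_fun n g"
  shows "rec_fun n (\<lambda>xs. f xs mod g xs)"
  using rec_fun_diff[OF assms(1) rec_fun_mult[OF assms(2) rec_fun_div[OF assms]]]
  by (rule rec_fun_cong) (simp add: minus_mult_div_eq_mod)

lemma rec_fun_triangle: "rec_fun n f \<Longrightarrow> rec_fun n (\<lambda>xs. triangle (f xs))"
  unfolding triangle_def by (intro rec_fun_div rec_fun_mult rec_fun_Suc rec_fun_const)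

lemma rec_fun_prod_encode: "rec_fun n f \<Longrightarrow> rec_fun n g \<Longrightarrow> rec_fun n (\<lambda>xs. prod_encode (f xs, g xs))"
  unfolding prod_encode_def by (auto intro!: rec_fun_add rec_fun_triangle)

lemma prod_decode_sum_eq:
  "fst (prod_decode c) + snd (prod_decode c) = (\<Sum>i<c. of_bool (triangle (Suc i) \<le> c))"
proof -
  obtain a b where ab: "prod_decode c = (a, b)" by (cases "prod_decode c")
  then have c: "c = triangle (a + b) + a"
    using prod_decode_inverse[of c] unfolding prod_encode_def by simp
  have mono: "i \<le> j \<Longrightarrow> triangle i \<le> triangle j" for i j
    by (induction j) (auto simp: le_Suc_eq)
  have below: "triangle (Suc i) \<le> c \<longleftrightarrow> i < a + b" for i
    using mono[of "Suc (a + b)" "Suc i"] mono[of "Suc i" "a + b"] c by (cases "i < a + b") auto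
  have "k \<le> triangle k" for k
    by (induction k) auto
  then have "a + b \<le> c"
    using c by (metis trans_le_add1)
  then have "{..<c} \<inter> {i. triangle (Suc i) \<le> c} = {..<a + b}"
    unfolding below by auto
  then show ?thesis
    using ab by (simp add: sum_of_bool_eq)
qed

lemma rec_fun_prod_decode:
  assumes "rec_fun n f"
  shows "rec_fun n (\<lambda>xs. fst (prod_decode (f xs)))" and "rec_fun n (\<lambda>xs. snd (prod_decode (f xs)))"
proof -
  define K where "K c = (\<Sum>i<c. of_bool (triangle (Suc i) \<le> c) :: nat)" for c
  have fst: "fst (prod_decode c) = c - triangle (K c)" for c
  proof -
    obtain a b where ab: "prod_decode c = (a, b)" by (cases "prod_decode c")
    then have "c = triangle (a + b) + a"
      using prod_decode_inverse[of c] unfolding prod_encode_def by simp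
    then show ?thesis using prod_decode_sum_eq[of c] ab unfolding K_def by simp
  qed
  have "rec_rel (Suc n) (\<lambda>ys. triangle (Suc (ys ! 0)) \<le> f (tl ys))"
    by (intro rec_rel_le rec_fun_triangle rec_fun_Suc rec_fun_proj rec_fun_tl assms) simp
  from rec_fun_sum[OF this[unfolded rec_rel_def] assms]
  have K: "rec_fun n (\<lambda>xs. K (f xs))"
    by (simp add: K_def del: triangle_Suc)
  show "rec_fun n (\<lambda>xs. fst (prod_decode (f xs)))"
    unfolding fst by (intro rec_fun_diff rec_fun_triangle assms K)
  show "rec_fun n (\<lambda>xs. snd (prod_decode (f xs)))"
    using rec_fun_diff[OF K \<open>rec_fun n (\<lambda>xs. fst (prod_decode (f xs)))\<close>]
    by (rule rec_fun_cong) (simp only: K_def prod_decode_sum_eq[symmetric] add_diff_cancel_left')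
qed

lemma recursive_nat_iff_rec_fun: "recursive_nat g \<longleftrightarrow> rec_fun 1 (\<lambda>xs. g (xs ! 0))"
proof
  assume "recursive_nat g"
  then obtain c where "\<forall>n. eval c [n] (g n)" unfolding recursive_nat_def by blast
  then have "eval c xs (g (xs ! 0))" if "length xs = 1" for xs
    using that by (cases xs) auto
  then show "rec_fun 1 (\<lambda>xs. g (xs ! 0))" unfolding rec_fun_def by blast
next
  assume "rec_fun 1 (\<lambda>xs. g (xs ! 0))"
  then obtain c where c: "\<forall>xs. length xs = 1 \<longrightarrow> eval c xs (g (xs ! 0))"
    unfolding rec_fun_def by blast
  have "eval c [n] (g n)" for n
    using c[rule_format, of "[n]"] by simp
  then show "recursive_nat g" unfolding recursive_nat_def by blast
qed

lemma rec_fun_recursive_nat: "recursive_nat g \<Longrightarrow> rec_fun n f \<Longrightarrow> rec_fun n (\<lambda>xs. g (f xs))"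
  unfolding recursive_nat_iff_rec_fun using rec_fun_comp1 by fastforce

section \<open>Coding of situations\<close>

lemma enc_sit_append: "enc_sit (s @ t) = enc_sit s + 2 ^ length s * enc_sit t"
  by (induction s) (auto simp: algebra_simps)

lemma enc_sit_bounds:
  shows "2 ^ length s \<le> enc_sit s + 1" and "enc_sit s + 2 \<le> 2 ^ (length s + 1)"
  by (induction s) auto

lemma length_eq_iff_enc_sit_bounds:
  "length s = n \<longleftrightarrow> 2 ^ n \<le> enc_sit s + 1 \<and> enc_sit s + 2 \<le> 2 ^ (n + 1)"
proof
  assume "2 ^ n \<le> enc_sit s + 1 \<and> enc_sit s + 2 \<le> 2 ^ (n + 1)"
  then have "(2::nat) ^ n < 2 ^ (length s + 1)" "(2::nat) ^ length s < 2 ^ (n + 1)"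
    using enc_sit_bounds[of s] by linarith+
  moreover have "(1::nat) < 2" by simp
  ultimately have "n < length s + 1" "length s < n + 1"
    by (simp_all only: power_strict_increasing_iff)
  then show "length s = n" by simp
qed (use enc_sit_bounds in auto)

lemma inj_enc_sit: "inj enc_sit"
proof
  show "enc_sit s = enc_sit t \<Longrightarrow> s = t" for s t
  proof (induction s arbitrary: t)
    case Nil
    then show ?case by (cases t) (auto split: if_splits)
  next
    case (Cons a s)
    then obtain b t' where t: "t = b # t'"
      by (cases t) (auto split: if_splits)
    with Cons.prems have "a = b"
      by (cases a; cases b) (simp_all, presburger+)
    with Cons t show ?case by auto
  qed
qed

fun dec_sit :: "nat \<Rightarrow> sit" where
  "dec_sit 0 = []"
| "dec_sit (Suc m) = odd m # dec_sit (m div 2)"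

lemma enc_sit_dec_sit: "enc_sit (dec_sit e) = e"
  by (induction e rule: dec_sit.induct) auto

lemma mod_eq_imp_eq_window:
  fixes x y m :: nat
  assumes "x mod m = y mod m" "m \<le> x + 1" "x + 2 \<le> 2 * m" "m \<le> y + 1" "y + 2 \<le> 2 * m"
  shows "x = y"
proof -
  have "a = b" if "b mod m = a mod m" "a \<le> b" "b - a < m" for a b
  proof -
    have "m dvd b - a" using mod_eq_dvd_iff_nat[OF that(2), of m] that(1) by blast
    then have "b - a = 0" using that(3) nat_dvd_not_less by blast
    then show ?thesis using that(2) by simp
  qed
  moreover have "y - x < m" "x - y < m" using assms(2-5) by linarith+
  ultimately show ?thesis
    using assms(1) by (metis nat_le_linear)
qed

text \<open>Whether a situation extends s0 can be read off its code: the codes of the situations of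
length N fill the window 2^N - 1 .. 2^(N+1) - 2, one residue class modulo 2^N each.\<close>

lemma take_eq_iff_enc_sit:
  assumes "length s0 = N"
  shows "take N s = s0 \<longleftrightarrow> 2 ^ N \<le> enc_sit s + 1 \<and> enc_sit s mod 2 ^ N = enc_sit s0 mod 2 ^ N"
proof
  assume "take N s = s0"
  then have "enc_sit s = enc_sit s0 + 2 ^ N * enc_sit (drop N s)"
    using assms enc_sit_append[of s0 "drop N s"] append_take_drop_id[of N s] by simp
  then show "2 ^ N \<le> enc_sit s + 1 \<and> enc_sit s mod 2 ^ N = enc_sit s0 mod 2 ^ N"
    using enc_sit_bounds(1)[of s0] assms by simp
next
  assume code: "2 ^ N \<le> enc_sit s + 1 \<and> enc_sit s mod 2 ^ N = enc_sit s0 mod 2 ^ N"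
  have "N \<le> length s"
  proof (rule ccontr)
    assume "\<not> N \<le> length s"
    then have "(2::nat) ^ (length s + 1) \<le> 2 ^ N" by (intro power_increasing) auto
    then show False using enc_sit_bounds(2)[of s] code by linarith
  qed
  define u where "u = take N s"
  have u: "length u = N" using \<open>N \<le> length s\<close> by (simp add: u_def)
  have "enc_sit s = enc_sit u + 2 ^ N * enc_sit (drop N s)"
    using enc_sit_append[of u "drop N s"] u by (simp add: u_def)
  then have "enc_sit u mod 2 ^ N = enc_sit s0 mod 2 ^ N"
    using code by simp
  then have "enc_sit u = enc_sit s0"
    by (rule mod_eq_imp_eq_window) (use enc_sit_bounds[of u] enc_sit_bounds[of s0] u assms in simp_all)
  then show "take N s = s0"
    using inj_eq[OF inj_enc_sit] by (simp add: u_def)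
qed

lemma length_le_if_take_eq:
  assumes "take (length s0) s = s0"
  shows "length s0 \<le> length s"
  using length_take[of "length s0" s] unfolding assms by linarith

section \<open>Upper expectations and supermartingales\<close>

definition Delta :: "(sit \<Rightarrow> real) \<Rightarrow> sit \<Rightarrow> bool \<Rightarrow> real" where
  "Delta F s = (\<lambda>x. F (s @ [x]) - F s)"

lemma supermartingale_iff_Delta: "supermartingale \<phi> M \<longleftrightarrow> (\<forall>s. UExp (\<phi> s) (Delta M s) \<le> 0)"
  unfolding supermartingale_def Delta_def ..

lemma Exp_eq: "Exp r f = f False + r * (f True - f False)"
  unfolding Exp_def by (simp add: algebra_simps)

lemma UExp_eq_max:
  assumes "a \<le> b"
  shows "UExp (a, b) f = max (Exp a f) (Exp b f)"
proof -
  have le: "Exp r f \<le> max (Exp a f) (Exp b f)" if "r \<in> {a..b}" for r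
  proof (cases "f True - f False \<ge> 0")
    case True
    then have "r * (f True - f False) \<le> b * (f True - f False)"
      using that by (intro mult_right_mono) auto
    then show ?thesis unfolding Exp_eq by linarith
  next
    case False
    then have "r * (f True - f False) \<le> a * (f True - f False)"
      using that by (intro mult_right_mono_neg) auto
    then show ?thesis unfolding Exp_eq by linarith
  qed
  have "bdd_above ((\<lambda>r. Exp r f) ` {a..b})"
    using le by (intro bdd_aboveI2)
  then show ?thesis
    unfolding UExp_def using assms
    by (auto intro!: antisym cSUP_least le cSUP_upper)
qed

lemma UExp_point: "UExp (r, r) f = Exp r f"
  using UExp_eq_max[of r r f] by simp

lemma UExp_nonpos_iff: "a \<le> b \<Longrightarrow> UExp (a, b) f \<le> 0 \<longleftrightarrow> Exp a f \<le> 0 \<and> Exp b f \<le> 0"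
  by (simp add: UExp_eq_max)

lemma Exp_divide: "Exp r (\<lambda>x. f x / c) = Exp r f / c"
  unfolding Exp_def by (simp add: diff_divide_distrib add_divide_distrib)

lemma supermartingale_phi_sw_iff:
  "supermartingale (phi_sw w p q) T \<longleftrightarrow> (\<forall>s. Exp (if w (length s) then q else p) (Delta T s) \<le> 0)"
  unfolding supermartingale_iff_Delta phi_sw_def by (simp add: UExp_point if_distrib)

lemma supermartingale_const_fs_iff:
  "p \<le> q \<Longrightarrow> supermartingale (const_fs (p, q)) T \<longleftrightarrow> (\<forall>s. Exp p (Delta T s) \<le> 0 \<and> Exp q (Delta T s) \<le> 0)"
  unfolding supermartingale_iff_Delta const_fs_def by (simp add: UExp_nonpos_iff)

lemma rec_tests_const_fs_subset_phi_sw: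
  "p \<le> q \<Longrightarrow> rec_tests (const_fs (p, q)) \<subseteq> rec_tests (phi_sw w p q)"
  unfolding rec_tests_def test_supermartingale_def
  by (auto simp: supermartingale_phi_sw_iff supermartingale_const_fs_iff)

section \<open>Deciding where a test fails to be a supermartingale\<close>

definition code_num_pos :: "nat \<Rightarrow> nat" where
  "code_num_pos c = (if even (fst (prod_decode c)) then fst (prod_decode c) div 2 else 0)"

definition code_num_neg :: "nat \<Rightarrow> nat" where
  "code_num_neg c = (if even (fst (prod_decode c)) then 0 else fst (prod_decode c) div 2 + 1)"

definition code_den :: "nat \<Rightarrow> nat" where
  "code_den c = Suc (snd (prod_decode c))"

lemma dec_rat_eq_code:
  "dec_rat c = (real (code_num_pos c) - real (code_num_neg c)) / real (code_den c)"
proof -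
  obtain a b where "prod_decode c = (a, b)" by (cases "prod_decode c")
  then show ?thesis
    unfolding dec_rat_def code_num_pos_def code_num_neg_def code_den_def int_decode_def sum_decode_def
    by auto
qed

lemma rec_fun_code:
  assumes "rec_fun n f"
  shows "rec_fun n (\<lambda>xs. code_num_pos (f xs))" "rec_fun n (\<lambda>xs. code_num_neg (f xs))"
    "rec_fun n (\<lambda>xs. code_den (f xs))"
  unfolding code_num_pos_def code_num_neg_def code_den_def even_iff_mod_2_eq_zero
  by (intro rec_fun_If rec_rel_eq rec_fun_mod rec_fun_div rec_fun_add rec_fun_Suc rec_fun_const
      rec_fun_prod_decode assms)+

lemma frac_comb_pos_iff:
  fixes a b P M D P0 M0 D0 P1 M1 D1 :: nat
  assumes "0 < b" "a \<le> b" "0 < D" "0 < D0" "0 < D1"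
  shows "0 < real a / real b * ((real P1 - real M1) / real D1 - (real P - real M) / real D)
        + (1 - real a / real b) * ((real P0 - real M0) / real D0 - (real P - real M) / real D)
    \<longleftrightarrow> a * M1 * D0 * D + (b - a) * M0 * D1 * D + b * P * D0 * D1
        < a * P1 * D0 * D + (b - a) * P0 * D1 * D + b * M * D0 * D1"
proof -
  define X where "X = a * P1 * D0 * D + (b - a) * P0 * D1 * D + b * M * D0 * D1"
  define Y where "Y = a * M1 * D0 * D + (b - a) * M0 * D1 * D + b * P * D0 * D1"
  have "real (b - a) = real b - real a" using assms(2) by (simp add: of_nat_diff)
  then have "real a / real b * ((real P1 - real M1) / real D1 - (real P - real M) / real D)
        + (1 - real a / real b) * ((real P0 - real M0) / real D0 - (real P - real M) / real D)
      = (real X - real Y) / (real b * real D * real D0 * real D1)"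
    unfolding X_def Y_def using assms by (simp add: field_simps)
  moreover have "0 < real b * real D * real D0 * real D1" using assms by simp
  ultimately show ?thesis
    unfolding X_def[symmetric] Y_def[symmetric] by (simp add: zero_less_divide_iff)
qed

text \<open>With T = dec_rat \<circ> g \<circ> enc_sit, the children of the situation with code e and length n
have codes e + 2^n and e + 2 * 2^n; Exp (a/b) (Delta T s) > 0 is decided by cross-multiplying.\<close>

definition Exp_pos_code :: "(nat \<Rightarrow> nat) \<Rightarrow> nat \<Rightarrow> nat \<Rightarrow> nat \<Rightarrow> nat \<Rightarrow> bool" where
  "Exp_pos_code g a b e n \<longleftrightarrow>
     a * code_num_neg (g (e + 2 ^ n * 2)) * code_den (g (e + 2 ^ n)) * code_den (g e)
     + (b - a) * code_num_neg (g (e + 2 ^ n)) * code_den (g (e + 2 ^ n * 2)) * code_den (g e)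
     + b * code_num_pos (g e) * code_den (g (e + 2 ^ n)) * code_den (g (e + 2 ^ n * 2))
   < a * code_num_pos (g (e + 2 ^ n * 2)) * code_den (g (e + 2 ^ n)) * code_den (g e)
     + (b - a) * code_num_pos (g (e + 2 ^ n)) * code_den (g (e + 2 ^ n * 2)) * code_den (g e)
     + b * code_num_neg (g e) * code_den (g (e + 2 ^ n)) * code_den (g (e + 2 ^ n * 2))"

lemma Exp_pos_iff_Exp_pos_code:
  assumes T: "\<And>s. T s = dec_rat (g (enc_sit s))" and "0 < b" "a \<le> b"
  shows "0 < Exp (real a / real b) (Delta T s) \<longleftrightarrow> Exp_pos_code g a b (enc_sit s) (length s)"
proof -
  have children: "enc_sit (s @ [True]) = enc_sit s + 2 ^ length s * 2"
    "enc_sit (s @ [False]) = enc_sit s + 2 ^ length s"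
    by (simp_all add: enc_sit_append)
  show ?thesis
    unfolding Exp_def Delta_def T children Exp_pos_code_def dec_rat_eq_code
    by (intro frac_comb_pos_iff) (simp_all add: code_den_def assms)
qed

definition violation_time :: "(nat \<Rightarrow> nat) \<Rightarrow> nat \<Rightarrow> nat \<Rightarrow> nat \<Rightarrow> bool" where
  "violation_time g a b n \<longleftrightarrow>
     (\<exists>e<2 ^ (n + 1). 2 ^ n \<le> e + 1 \<and> e + 2 \<le> 2 ^ (n + 1) \<and> Exp_pos_code g a b e n)"

lemma violation_time_iff:
  assumes "\<And>s. T s = dec_rat (g (enc_sit s))" "0 < b" "a \<le> b"
  shows "violation_time g a b n \<longleftrightarrow> (\<exists>s. length s = n \<and> 0 < Exp (real a / real b) (Delta T s))"
proof -
  have "violation_time g a b n \<longleftrightarrow> (\<exists>s. length s = n \<and> Exp_pos_code g a b (enc_sit s) n)"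
  proof
    assume "violation_time g a b n"
    then obtain e where "2 ^ n \<le> e + 1" "e + 2 \<le> 2 ^ (n + 1)" "Exp_pos_code g a b e n"
      unfolding violation_time_def by blast
    moreover have "length (dec_sit e) = n"
      using calculation length_eq_iff_enc_sit_bounds[of "dec_sit e" n] by (simp only: enc_sit_dec_sit)
    ultimately show "\<exists>s. length s = n \<and> Exp_pos_code g a b (enc_sit s) n"
      by (intro exI[of _ "dec_sit e"]) (simp only: enc_sit_dec_sit)
  next
    assume "\<exists>s. length s = n \<and> Exp_pos_code g a b (enc_sit s) n"
    then obtain s where s: "length s = n" "Exp_pos_code g a b (enc_sit s) n"
      by blast
    moreover have "enc_sit s + 2 \<le> 2 ^ (n + 1)" "2 ^ n \<le> enc_sit s + 1"
      using s(1) length_eq_iff_enc_sit_bounds[of s n] by simp_all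
    ultimately show "violation_time g a b n"
      unfolding violation_time_def by (intro exI[of _ "enc_sit s"]) simp
  qed
  then show ?thesis
    using Exp_pos_iff_Exp_pos_code[of T g, OF assms] by auto
qed

lemma recursive_temporal_sel_violation_time:
  assumes "recursive_nat g"
  shows "recursive_temporal_sel (violation_time g a b)"
proof -
  have sel: "rec_rel (Suc 1) (\<lambda>ys. 2 ^ (ys ! 1) \<le> ys ! 0 + 1 \<and> ys ! 0 + 2 \<le> 2 ^ (ys ! 1 + 1)
      \<and> Exp_pos_code g a b (ys ! 0) (ys ! 1))"
    unfolding Exp_pos_code_def
    by (intro rec_rel_conj rec_rel_le rec_rel_less rec_fun_add rec_fun_mult rec_fun_diff rec_fun_power2
        rec_fun_proj rec_fun_const rec_fun_code rec_fun_recursive_nat[OF assms]) simp_all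
  have bound: "rec_fun 1 (\<lambda>xs. 2 ^ (xs ! 0 + 1))"
    by (intro rec_fun_power2 rec_fun_add rec_fun_proj rec_fun_const) simp
  from rec_rel_bounded_ex[OF sel bound]
  have "rec_rel 1 (\<lambda>xs. violation_time g a b (xs ! 0))"
    unfolding violation_time_def by simp
  then show ?thesis
    unfolding recursive_temporal_sel_def recursive_nat_iff_rec_fun rec_rel_def of_bool_def by simp
qed

lemma Rats_unit_interval_cases:
  assumes "r \<in> \<rat>" "0 \<le> r" "r \<le> 1"
  obtains a b :: nat where "0 < b" "a \<le> b" "r = real a / real b"
proof -
  obtain x y :: int where xy: "0 < y" "r = of_int x / of_int y"
    using Rats_cases'[OF assms(1)] by metis
  then have "0 \<le> x" "x \<le> y"
    using assms(2,3) by (simp_all add: zero_le_divide_iff divide_le_eq_1)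
  then show ?thesis
    using xy by (intro that[of "nat y" "nat x"]) auto
qed

lemma recursive_temporal_sel_Exp_pos:
  assumes "recursive_rat_sit T" "r \<in> \<rat>" "0 \<le> r" "r \<le> 1"
  shows "recursive_temporal_sel (\<lambda>n. \<exists>s. length s = n \<and> 0 < Exp r (Delta T s))"
proof -
  obtain g where g: "recursive_nat g" "\<And>s. T s = dec_rat (g (enc_sit s))"
    using assms(1) unfolding recursive_rat_sit_def by blast
  obtain a b :: nat where ab: "0 < b" "a \<le> b" "r = real a / real b"
    using Rats_unit_interval_cases[OF assms(2-4)] by blast
  have "violation_time g a b = (\<lambda>n. \<exists>s. length s = n \<and> 0 < Exp r (Delta T s))"
    unfolding fun_eq_iff ab(3) using violation_time_iff[of T g, OF g(2) ab(1,2)] by blast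
  then show ?thesis
    using recursive_temporal_sel_violation_time[OF g(1), of a b] by simp
qed

section \<open>Weak Church randomness\<close>

lemma filterlim_selection_count:
  assumes "infinite {n. S n}"
  shows "filterlim (\<lambda>n. \<Sum>k<n. of_bool (S k) :: real) at_top sequentially"
  unfolding filterlim_at_top
proof
  fix Z :: real
  obtain B where B: "finite B" "card B = nat \<lceil>Z\<rceil>" "B \<subseteq> {n. S n}"
    using infinite_arbitrarily_large[OF assms] by blast
  have "Z \<le> (\<Sum>k<n. of_bool (S k))" if "Suc (Max (insert 0 B)) \<le> n" for n
  proof -
    have "x < n" if "x \<in> B" for x
    proof -
      have "x \<le> Max (insert 0 B)" using B(1) that by simp
      then show ?thesis using \<open>Suc (Max (insert 0 B)) \<le> n\<close> by linarith
    qed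
    then have "B \<subseteq> {..<n} \<inter> {k. S k}"
      using B(3) by auto
    then have "card B \<le> card ({..<n} \<inter> {k. S k})"
      by (intro card_mono) auto
    then show ?thesis
      using B(2) by (simp add: sum_of_bool_eq)
  qed
  then show "\<forall>\<^sub>F n in sequentially. Z \<le> (\<Sum>k<n. of_bool (S k))"
    unfolding eventually_sequentially by blast
qed

lemma selection_average_limits:
  assumes "infinite {n. S n}" and "\<And>k. S k \<Longrightarrow> f k = c"
  shows "liminf (\<lambda>n. ereal ((\<Sum>k<n. of_bool (S k) * f k) / (\<Sum>k<n. of_bool (S k)))) = ereal c"
    and "limsup (\<lambda>n. ereal ((\<Sum>k<n. of_bool (S k) * f k) / (\<Sum>k<n. of_bool (S k)))) = ereal c"
proof -
  have "\<forall>\<^sub>F n in sequentially. 0 < (\<Sum>k<n. of_bool (S k) :: real)"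
    using filterlim_selection_count[OF assms(1)] unfolding filterlim_at_top_dense by blast
  then have avg: "\<forall>\<^sub>F n in sequentially.
      ereal ((\<Sum>k<n. of_bool (S k) * f k) / (\<Sum>k<n. of_bool (S k))) = ereal c"
  proof (rule eventually_mono)
    fix n assume pos: "0 < (\<Sum>k<n. of_bool (S k) :: real)"
    have "(\<Sum>k<n. of_bool (S k) * f k) = (\<Sum>k<n. of_bool (S k) * c)"
      by (rule sum.cong) (auto simp: assms(2))
    also have "\<dots> = (\<Sum>k<n. of_bool (S k)) * c"
      by (simp only: sum_distrib_right)
    finally show "ereal ((\<Sum>k<n. of_bool (S k) * f k) / (\<Sum>k<n. of_bool (S k))) = ereal c"
      using pos by (simp only: nonzero_mult_div_cancel_left[OF less_imp_neq[OF pos, symmetric]])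
  qed
  show "liminf (\<lambda>n. ereal ((\<Sum>k<n. of_bool (S k) * f k) / (\<Sum>k<n. of_bool (S k)))) = ereal c"
    using Liminf_eq[OF avg] by (simp add: Liminf_const)
  show "limsup (\<lambda>n. ereal ((\<Sum>k<n. of_bool (S k) * f k) / (\<Sum>k<n. of_bool (S k)))) = ereal c"
    using Limsup_eq[OF avg] by (simp add: Limsup_const)
qed

lemma wCH_random_selection_finite:
  assumes wCH: "wCH_random (const_fs I) w" and I: "0 < fst I" "snd I < 1"
    and S: "recursive_temporal_sel S" and selected_eq: "\<And>n. S n \<Longrightarrow> w n = v"
  shows "finite {n. S n}"
proof (rule ccontr)
  assume inf: "infinite {n. S n}"
  then have "liminf (\<lambda>n. ereal ((\<Sum>k<n. of_bool (S k) * (of_bool (w k) - fst I)) / (\<Sum>k<n. of_bool (S k)))) \<ge> 0"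
    and "limsup (\<lambda>n. ereal ((\<Sum>k<n. of_bool (S k) * (of_bool (w k) - snd I)) / (\<Sum>k<n. of_bool (S k)))) \<le> 0"
    using wCH S filterlim_selection_count[OF inf] unfolding wCH_random_def const_fs_def by blast+
  moreover have "liminf (\<lambda>n. ereal ((\<Sum>k<n. of_bool (S k) * (of_bool (w k) - fst I)) / (\<Sum>k<n. of_bool (S k))))
      = ereal (of_bool v - fst I)"
    by (rule selection_average_limits(1)[OF inf]) (simp add: selected_eq)
  moreover have "limsup (\<lambda>n. ereal ((\<Sum>k<n. of_bool (S k) * (of_bool (w k) - snd I)) / (\<Sum>k<n. of_bool (S k))))
      = ereal (of_bool v - snd I)"
    by (rule selection_average_limits(2)[OF inf]) (simp add: selected_eq)
  ultimately show False
    using I by (cases v) auto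
qed

lemma finite_violation_times:
  assumes "wCH_random (const_fs I) w" "0 < fst I" "snd I < 1"
    and "recursive_rat_sit T" "r \<in> \<rat>" "0 \<le> r" "r \<le> 1"
    and "\<And>s. w (length s) = v \<Longrightarrow> Exp r (Delta T s) \<le> 0"
  shows "finite {n. \<exists>s. length s = n \<and> 0 < Exp r (Delta T s)}"
proof (rule wCH_random_selection_finite[OF assms(1-3)])
  show "recursive_temporal_sel (\<lambda>n. \<exists>s. length s = n \<and> 0 < Exp r (Delta T s))"
    using assms(4-7) by (rule recursive_temporal_sel_Exp_pos)
  show "w n = (\<not> v)" if "\<exists>s. length s = n \<and> 0 < Exp r (Delta T s)" for n
    using that assms(8) by force
qed

lemma rec_test_phi_sw_eventually_supermartingale:
  assumes "p \<in> \<rat>" "q \<in> \<rat>" "0 \<le> p" "p \<le> q" "q \<le> 1"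
    and "0 < fst I" "snd I < 1" "wCH_random (const_fs I) w"
    and T: "T \<in> rec_tests (phi_sw w p q)"
  obtains N where "\<And>s. N \<le> length s \<Longrightarrow> UExp (p, q) (Delta T s) \<le> 0"
proof -
  have sm: "Exp (if w (length s) then q else p) (Delta T s) \<le> 0" for s
    using T unfolding rec_tests_def test_supermartingale_def supermartingale_phi_sw_iff by blast
  have sm_q: "Exp q (Delta T s) \<le> 0" if "w (length s)" for s
    using sm[of s] that by simp
  have sm_p: "Exp p (Delta T s) \<le> 0" if "\<not> w (length s)" for s
    using sm[of s] that by simp
  have rec: "recursive_rat_sit T"
    using T unfolding rec_tests_def by blast
  have "finite {n. \<exists>s. length s = n \<and> 0 < Exp q (Delta T s)}"
    using assms(2-5) sm_q by (intro finite_violation_times[OF assms(8,6,7) rec, where v = True]) auto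
  moreover have "finite {n. \<exists>s. length s = n \<and> 0 < Exp p (Delta T s)}"
    using assms(1-5) sm_p by (intro finite_violation_times[OF assms(8,6,7) rec, where v = False]) auto
  ultimately have "finite ({n. \<exists>s. length s = n \<and> 0 < Exp q (Delta T s)}
      \<union> {n. \<exists>s. length s = n \<and> 0 < Exp p (Delta T s)})"
    by blast
  then obtain N where N: "\<forall>n \<in> {n. \<exists>s. length s = n \<and> 0 < Exp q (Delta T s)}
      \<union> {n. \<exists>s. length s = n \<and> 0 < Exp p (Delta T s)}. n < N"
    unfolding finite_nat_set_iff_bounded by blast
  show ?thesis
  proof (rule that)
    fix s :: sit
    assume "N \<le> length s"
    then have "\<not> 0 < Exp q (Delta T s)" "\<not> 0 < Exp p (Delta T s)"
      using N[rule_format, of "length s"] by auto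
    then show "UExp (p, q) (Delta T s) \<le> 0"
      using assms(4) by (simp add: UExp_nonpos_iff)
  qed
qed

section \<open>Restarting a test\<close>

lemma int_decode_scale:
  assumes "0 < d"
  shows "int_decode (if even a then a * d else (a + 1) * d - 1) = int_decode a * int d"
proof (cases "even a")
  case False
  then obtain k where "a = 2 * k + 1" using oddE by blast
  moreover have "odd (2 * (k + 1) * d - 1)" using assms by simp
  moreover have "(2 * (k + 1) * d - 1) div 2 = (k + 1) * d - 1"
    using assms by (simp add: mult.assoc)
  ultimately show ?thesis
    using assms by (simp add: int_decode_def sum_decode_def algebra_simps of_nat_diff)
qed (auto simp: int_decode_def sum_decode_def)

lemma Rats_pos_cases:
  assumes "c \<in> \<rat>" "0 < c"
  obtains P D :: nat where "0 < P" "0 < D" "c = real P / real D"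
proof -
  obtain x y :: int where xy: "0 < y" "c = of_int x / of_int y"
    using Rats_cases'[OF assms(1)] by metis
  then have "0 < x" using assms(2) by (simp add: zero_less_divide_iff)
  with xy show ?thesis by (intro that[of "nat x" "nat y"]) auto
qed

lemma recursive_nat_dec_rat_divide:
  assumes "recursive_nat g" "c \<in> \<rat>" "0 < c"
  obtains g' where "recursive_nat g'" "\<And>x. dec_rat (g' x) = dec_rat (g x) / c"
proof -
  obtain P D :: nat where PD: "0 < P" "0 < D" "c = real P / real D"
    using Rats_pos_cases[OF assms(2,3)] by blast
  define num where "num x = fst (prod_decode (g x))" for x
  define den where "den x = snd (prod_decode (g x))" for x
  define g' where "g' x = prod_encode (if even (num x) then num x * D else (num x + 1) * D - 1,
      Suc (den x) * P - 1)" for x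
  have "rec_fun 1 (\<lambda>xs. g' (xs ! 0))"
    unfolding g'_def num_def den_def even_iff_mod_2_eq_zero
    by (intro rec_fun_prod_encode rec_fun_If rec_rel_eq rec_fun_mod rec_fun_mult rec_fun_diff
        rec_fun_add rec_fun_Suc rec_fun_const rec_fun_prod_decode rec_fun_recursive_nat[OF assms(1)]
        rec_fun_proj) simp_all
  then have "recursive_nat g'"
    unfolding recursive_nat_iff_rec_fun .
  moreover have "dec_rat (g' x) = dec_rat (g x) / c" for x
  proof -
    have "Suc (Suc (den x) * P - 1) = Suc (den x) * P" using PD(1) by simp
    then have "dec_rat (g' x) = of_int (int_decode (num x) * int D) / (real (Suc (den x)) * real P)"
      unfolding g'_def dec_rat_def using int_decode_scale[OF PD(2)] by (simp add: algebra_simps)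
    also have "\<dots> = dec_rat (g x) / c"
      unfolding dec_rat_def num_def den_def PD(3) using PD(1,2)
      by (simp add: case_prod_beta field_simps)
    finally show ?thesis .
  qed
  ultimately show ?thesis using that by blast
qed

lemma recursive_rat_sit_divide:
  assumes "recursive_rat_sit T" "c \<in> \<rat>" "0 < c"
  shows "recursive_rat_sit (\<lambda>s. T s / c)"
proof -
  obtain g where g: "recursive_nat g" "\<And>s. T s = dec_rat (g (enc_sit s))"
    using assms(1) unfolding recursive_rat_sit_def by blast
  obtain g' where "recursive_nat g'" "\<And>x. dec_rat (g' x) = dec_rat (g x) / c"
    using recursive_nat_dec_rat_divide[OF g(1) assms(2,3)] by blast
  then show ?thesis
    unfolding recursive_rat_sit_def g(2) by auto
qed

lemma recursive_rat_sit_const: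
  assumes "c \<in> \<rat>"
  shows "recursive_rat_sit (\<lambda>_. c)"
proof -
  obtain x y :: int where xy: "0 < y" "c = of_int x / of_int y"
    using Rats_cases'[OF assms] by metis
  then have "dec_rat (prod_encode (int_encode x, nat y - 1)) = c"
    by (simp add: dec_rat_def)
  moreover have "recursive_nat (\<lambda>_. prod_encode (int_encode x, nat y - 1))"
    unfolding recursive_nat_iff_rec_fun by (rule rec_fun_const)
  ultimately show ?thesis
    unfolding recursive_rat_sit_def by auto
qed

lemma recursive_rat_sit_if_extends:
  assumes "length s0 = N" "recursive_rat_sit T1" "recursive_rat_sit T2"
  shows "recursive_rat_sit (\<lambda>s. if take N s = s0 then T1 s else T2 s)"
proof -
  obtain g1 where g1: "recursive_nat g1" "\<And>s. T1 s = dec_rat (g1 (enc_sit s))"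
    using assms(2) unfolding recursive_rat_sit_def by blast
  obtain g2 where g2: "recursive_nat g2" "\<And>s. T2 s = dec_rat (g2 (enc_sit s))"
    using assms(3) unfolding recursive_rat_sit_def by blast
  define g where "g e = (if 2 ^ N \<le> e + 1 \<and> e mod 2 ^ N = enc_sit s0 mod 2 ^ N then g1 e else g2 e)" for e
  have "rec_fun 1 (\<lambda>xs. g (xs ! 0))"
    unfolding g_def
    by (intro rec_fun_If rec_rel_conj rec_rel_le rec_rel_eq rec_fun_mod rec_fun_add rec_fun_power2
        rec_fun_const rec_fun_proj rec_fun_recursive_nat[OF g1(1)] rec_fun_recursive_nat[OF g2(1)]) simp_all
  moreover have "(if take N s = s0 then T1 s else T2 s) = dec_rat (g (enc_sit s))" for s
    unfolding g_def g1(2) g2(2) take_eq_iff_enc_sit[OF assms(1)] by simp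
  ultimately show ?thesis
    unfolding recursive_rat_sit_def recursive_nat_iff_rec_fun by blast
qed

definition restart :: "(sit \<Rightarrow> real) \<Rightarrow> sit \<Rightarrow> sit \<Rightarrow> real" where
  "restart T s0 s = (if take (length s0) s = s0 then T s / T s0 else 1)"

lemma Delta_restart:
  assumes "T s0 \<noteq> 0"
  shows "Delta (restart T s0) s =
    (if take (length s0) s = s0 then (\<lambda>x. Delta T s x / T s0) else (\<lambda>_. 0))"
proof (cases "take (length s0) s = s0")
  case True
  then have "length s0 \<le> length s"
    by (rule length_le_if_take_eq)
  with True have "take (length s0) (s @ [x]) = s0" for x
    by simp
  with True show ?thesis
    unfolding Delta_def restart_def by (simp add: diff_divide_distrib)
next
  case False
  have "restart T s0 (s @ [x]) = 1" for x
    using False assms unfolding restart_def by (cases "length s0 \<le> length s") auto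
  with False show ?thesis
    unfolding Delta_def by (simp add: restart_def)
qed

lemma test_supermartingale_restart:
  assumes "p \<le> q" "0 < T s0" "\<And>s. 0 \<le> T s"
    and "\<And>s. length s0 \<le> length s \<Longrightarrow> UExp (p, q) (Delta T s) \<le> 0"
  shows "test_supermartingale (const_fs (p, q)) (restart T s0)"
proof -
  have "Exp p (Delta (restart T s0) s) \<le> 0 \<and> Exp q (Delta (restart T s0) s) \<le> 0" for s
  proof (cases "take (length s0) s = s0")
    case True
    then have "length s0 \<le> length s"
      by (rule length_le_if_take_eq)
    then have "Exp p (Delta T s) \<le> 0" "Exp q (Delta T s) \<le> 0"
      using assms(1,4) UExp_nonpos_iff by blast+
    with True show ?thesis
      using assms(2) by (simp add: Delta_restart Exp_divide divide_nonpos_pos)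
  qed (use assms(2) in \<open>simp add: Delta_restart Exp_def\<close>)
  moreover have "0 \<le> restart T s0 s" for s
    unfolding restart_def using assms(2,3) by simp
  moreover have "restart T s0 [] = 1"
    unfolding restart_def using assms(2) by auto
  ultimately show ?thesis
    unfolding test_supermartingale_def supermartingale_const_fs_iff[OF assms(1)] by blast
qed

lemma restart_in_rec_tests:
  assumes "T \<in> rec_tests \<phi>" "p \<le> q"
    and "\<And>s. length s0 \<le> length s \<Longrightarrow> UExp (p, q) (Delta T s) \<le> 0"
  shows "restart T s0 \<in> rec_tests (const_fs (p, q))"
proof -
  have T: "\<And>s. 0 < T s" "\<And>s. T s \<in> \<rat>" "recursive_rat_sit T"
    using assms(1) unfolding rec_tests_def by auto
  have "recursive_rat_sit (restart T s0)"
    unfolding restart_def[abs_def]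
    by (intro recursive_rat_sit_if_extends recursive_rat_sit_divide recursive_rat_sit_const T) simp_all
  moreover have "test_supermartingale (const_fs (p, q)) (restart T s0)"
    using T(1) assms(2,3) by (intro test_supermartingale_restart) (auto intro: less_imp_le)
  moreover have "0 < restart T s0 s" "restart T s0 s \<in> \<rat>" for s
    unfolding restart_def using T(1,2) by auto
  ultimately show ?thesis
    unfolding rec_tests_def by blast
qed

lemma real_growth_function_divide:
  assumes "real_growth_function \<tau>" "c \<in> \<rat>" "1 \<le> c"
  shows "real_growth_function (\<lambda>n. \<tau> n / c)"
proof -
  obtain g where g: "recursive_nat g" "\<And>d m. \<bar>\<tau> d - dec_rat (g (prod_encode (d, m)))\<bar> < 1 / 2 ^ m"
    using assms(1) unfolding real_growth_function_def computable_real_nat_def by blast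
  obtain g' where g': "recursive_nat g'" "\<And>x. dec_rat (g' x) = dec_rat (g x) / c"
    using recursive_nat_dec_rat_divide[OF g(1) assms(2)] assms(3) by auto
  have "\<bar>\<tau> d / c - dec_rat (g' (prod_encode (d, m)))\<bar> < 1 / 2 ^ m" for d m
  proof -
    have "\<bar>\<tau> d / c - dec_rat (g' (prod_encode (d, m)))\<bar> = \<bar>\<tau> d - dec_rat (g (prod_encode (d, m)))\<bar> / c"
      using assms(3) by (simp add: g'(2) abs_divide flip: diff_divide_distrib)
    also have "\<dots> \<le> \<bar>\<tau> d - dec_rat (g (prod_encode (d, m)))\<bar>"
      using assms(3) by (simp add: divide_le_eq mult_le_cancel_left1)
    finally show ?thesis using g(2)[of d m] by linarith
  qed
  then have "computable_real_nat (\<lambda>n. \<tau> n / c)"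
    unfolding computable_real_nat_def using g'(1) by blast
  moreover have "mono (\<lambda>n. \<tau> n / c)"
    using assms(1,3) unfolding real_growth_function_def mono_def by (simp add: divide_right_mono)
  moreover have "\<forall>n. 0 \<le> \<tau> n / c"
    using assms(1,3) unfolding real_growth_function_def by simp
  moreover have "\<exists>n. B < \<tau> n / c" for B
  proof -
    obtain n where "B * c < \<tau> n"
      using assms(1) unfolding real_growth_function_def by blast
    then show ?thesis
      using assms(3) by (auto simp: pos_less_divide_eq)
  qed
  ultimately show ?thesis
    unfolding real_growth_function_def by simp
qed

section \<open>Randomness under rescaled tests\<close>

definition eventually_rescaled_tests :: "fsys \<Rightarrow> fsys \<Rightarrow> (nat \<Rightarrow> bool) \<Rightarrow> bool" where
  "eventually_rescaled_tests \<psi> \<phi> \<omega> \<longleftrightarrow> (\<forall>T\<in>rec_tests \<psi>. \<exists>T'\<in>rec_tests \<phi>. \<exists>c\<in>\<rat>. 0 < c \<and>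
     (\<forall>\<^sub>F n in sequentially. T' (prefix \<omega> n) = T (prefix \<omega> n) / c))"

lemma limsup_eventually_divide_eq_infinity:
  assumes "\<forall>\<^sub>F n in sequentially. y n = x n / c" "0 < c" "limsup (\<lambda>n. ereal (x n)) = \<infinity>"
  shows "limsup (\<lambda>n. ereal (y n)) = \<infinity>"
proof -
  have "limsup (\<lambda>n. ereal (y n)) = limsup (\<lambda>n. ereal (x n) * ereal (1 / c))"
    using assms(1) by (intro Limsup_eq) (auto elim: eventually_mono)
  also have "\<dots> = limsup (\<lambda>n. ereal (x n)) * ereal (1 / c)"
    using assms(2) by (intro Limsup_ereal_mult_right) auto
  finally show ?thesis
    using assms(2,3) by simp
qed

lemma limsup_eventually_divide_nonneg:
  assumes "\<forall>\<^sub>F n in sequentially. y n = x n / c" "0 < c" "c \<le> K" "\<And>n. 0 \<le> x n"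
    and "0 \<le> limsup (\<lambda>n. ereal (x n - t n))"
  shows "0 \<le> limsup (\<lambda>n. ereal (y n - t n / K))"
proof -
  have "\<forall>\<^sub>F n in sequentially. ereal (x n - t n) * ereal (1 / K) \<le> ereal (y n - t n / K)"
    using assms(1)
  proof (rule eventually_mono)
    fix n assume "y n = x n / c"
    moreover have "x n / K \<le> x n / c"
      using assms(2-4) by (intro divide_left_mono) auto
    ultimately show "ereal (x n - t n) * ereal (1 / K) \<le> ereal (y n - t n / K)"
      by (simp add: diff_divide_distrib)
  qed
  then have "limsup (\<lambda>n. ereal (x n - t n) * ereal (1 / K)) \<le> limsup (\<lambda>n. ereal (y n - t n / K))"
    by (rule Limsup_mono)
  moreover have "limsup (\<lambda>n. ereal (x n - t n) * ereal (1 / K)) = limsup (\<lambda>n. ereal (x n - t n)) * ereal (1 / K)"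
    using assms(2,3) by (intro Limsup_ereal_mult_right) auto
  moreover have "0 \<le> limsup (\<lambda>n. ereal (x n - t n)) * ereal (1 / K)"
    using assms(2,3,5) by (intro ereal_0_le_mult) auto
  ultimately show ?thesis
    by simp
qed

lemma C_random_eq_if_eventually_rescaled_tests:
  assumes "rec_tests \<phi> \<subseteq> rec_tests \<psi>" "eventually_rescaled_tests \<psi> \<phi> \<omega>"
  shows "C_random \<psi> \<omega> \<longleftrightarrow> C_random \<phi> \<omega>"
proof
  assume "C_random \<psi> \<omega>"
  then show "C_random \<phi> \<omega>"
    using assms(1) unfolding C_random_def by blast
next
  assume random: "C_random \<phi> \<omega>"
  show "C_random \<psi> \<omega>"
    unfolding C_random_def
  proof
    assume "\<exists>T\<in>rec_tests \<psi>. limsup (\<lambda>n. ereal (T (prefix \<omega> n))) = \<infinity>"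
    then obtain T where T: "T \<in> rec_tests \<psi>" and lim: "limsup (\<lambda>n. ereal (T (prefix \<omega> n))) = \<infinity>"
      by blast
    obtain T' c where T': "T' \<in> rec_tests \<phi>" and c: "0 < c"
      and rescaled: "\<forall>\<^sub>F n in sequentially. T' (prefix \<omega> n) = T (prefix \<omega> n) / c"
      using assms(2) T unfolding eventually_rescaled_tests_def by blast
    have "limsup (\<lambda>n. ereal (T' (prefix \<omega> n))) = \<infinity>"
      using rescaled c lim by (rule limsup_eventually_divide_eq_infinity)
    then show False
      using random T' unfolding C_random_def by blast
  qed
qed

lemma S_random_eq_if_eventually_rescaled_tests:
  assumes "rec_tests \<phi> \<subseteq> rec_tests \<psi>" "eventually_rescaled_tests \<psi> \<phi> \<omega>"
  shows "S_random \<psi> \<omega> \<longleftrightarrow> S_random \<phi> \<omega>"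
proof
  assume "S_random \<psi> \<omega>"
  then show "S_random \<phi> \<omega>"
    using assms(1) unfolding S_random_def by blast
next
  assume random: "S_random \<phi> \<omega>"
  show "S_random \<psi> \<omega>"
    unfolding S_random_def
  proof
    assume "\<exists>T\<in>rec_tests \<psi>. \<exists>\<tau>. real_growth_function \<tau> \<and> 0 \<le> limsup (\<lambda>n. ereal (T (prefix \<omega> n) - \<tau> n))"
    then obtain T \<tau> where T: "T \<in> rec_tests \<psi>" and \<tau>: "real_growth_function \<tau>"
      and lim: "0 \<le> limsup (\<lambda>n. ereal (T (prefix \<omega> n) - \<tau> n))"
      by blast
    obtain T' c where T': "T' \<in> rec_tests \<phi>" and c: "c \<in> \<rat>" "0 < c"
      and rescaled: "\<forall>\<^sub>F n in sequentially. T' (prefix \<omega> n) = T (prefix \<omega> n) / c"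
      using assms(2) T unfolding eventually_rescaled_tests_def by blast
    have T_nonneg: "0 \<le> T s" for s
      using T unfolding rec_tests_def test_supermartingale_def by blast
    define K where "K = max 1 c"
    have K: "K \<in> \<rat>" "1 \<le> K"
      unfolding K_def using c(1) by (auto simp: max_def)
    have "0 \<le> limsup (\<lambda>n. ereal (T' (prefix \<omega> n) - \<tau> n / K))"
      using rescaled c(2) _ T_nonneg lim by (rule limsup_eventually_divide_nonneg) (simp add: K_def)
    moreover have "real_growth_function (\<lambda>n. \<tau> n / K)"
      using \<tau> K by (rule real_growth_function_divide)
    ultimately show False
      using random T' unfolding S_random_def by blast
  qed
qed

lemma eventually_rescaled_tests_phi_sw:
  assumes "p \<in> \<rat>" "q \<in> \<rat>" "0 \<le> p" "p \<le> q" "q \<le> 1"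
    and "0 < fst I" "snd I < 1" "wCH_random (const_fs I) w"
  shows "eventually_rescaled_tests (phi_sw w p q) (const_fs (p, q)) \<omega>"
  unfolding eventually_rescaled_tests_def
proof
  fix T assume T: "T \<in> rec_tests (phi_sw w p q)"
  obtain N where N: "\<And>s. N \<le> length s \<Longrightarrow> UExp (p, q) (Delta T s) \<le> 0"
    using rec_test_phi_sw_eventually_supermartingale[OF assms T] by blast
  define s0 where "s0 = prefix \<omega> N"
  have s0: "length s0 = N"
    unfolding s0_def prefix_def by simp
  have "restart T s0 \<in> rec_tests (const_fs (p, q))"
    using T assms(4) N s0 by (intro restart_in_rec_tests) auto
  moreover have "T s0 \<in> \<rat>" "0 < T s0"
    using T unfolding rec_tests_def by auto
  moreover have "\<forall>\<^sub>F n in sequentially. restart T s0 (prefix \<omega> n) = T (prefix \<omega> n) / T s0"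
    unfolding eventually_sequentially restart_def s0 s0_def prefix_def
    by (intro exI[of _ N]) (simp add: take_map min_def)
  ultimately show "\<exists>T'\<in>rec_tests (const_fs (p, q)). \<exists>c\<in>\<rat>. 0 < c \<and>
      (\<forall>\<^sub>F n in sequentially. T' (prefix \<omega> n) = T (prefix \<omega> n) / c)"
    by blast
qed

theorem corollary33:
  fixes p q :: real and I :: "real \<times> real" and w \<omega> :: "nat \<Rightarrow> bool"
  assumes "p \<in> \<rat>" and "q \<in> \<rat>" and "0 \<le> p" and "q \<le> 1" and "p < q"
    and "0 < fst I" and "fst I \<le> snd I" and "snd I < 1"
    and "wCH_random (const_fs I) w"
  shows "(C_random (phi_sw w p q) \<omega> \<longleftrightarrow> C_random (const_fs (p, q)) \<omega>)
       \<and> (S_random (phi_sw w p q) \<omega> \<longleftrightarrow> S_random (const_fs (p, q)) \<omega>)"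
proof -
  have "rec_tests (const_fs (p, q)) \<subseteq> rec_tests (phi_sw w p q)"
    using \<open>p < q\<close> by (intro rec_tests_const_fs_subset_phi_sw) simp
  moreover have "eventually_rescaled_tests (phi_sw w p q) (const_fs (p, q)) \<omega>"
    using assms by (intro eventually_rescaled_tests_phi_sw) auto
  ultimately show ?thesis
    using C_random_eq_if_eventually_rescaled_tests S_random_eq_if_eventually_rescaled_tests by blast
qed

end
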